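(* For every $\alpha\in(0,\pi/2)$, the competitive ratio of the Straight-Up algorithm is $$\rho(\textsc{Straight-Up};\alpha)=\begin{cases}2\cos\alpha & \text{if } \alpha\le \pi/4,\\ 1/\sin\alpha & \text{otherwise.}\end{cases}$$
   Context: Online drone coverage on a line. A drone has a fixed half angle-of-view $\alpha\in(0,\pi/2)$. A drone at a point $T=(t_x,t_y)$ with $t_y\ge 0$ covers the segment $[t_x-t_y\tan\alpha,\ t_x+t_y\tan\alpha]$ of the $x$-axis. For a point $X=(x,0)$ its feasibility cone is $\mathrm{FC}(X)=\{(u,v): v\ge 0,\ |u-x|\le v\tan\alpha\}$, and the feasibility cone of a finite set of points on the $x$-axis is the intersection of their cones. An input is a sequence of points $X_0=(0,0),X_1,\dots,X_n$ ($n\ge1$) on the $x$-axis, $X_i=(x_i,0)$, revealed one at a time. A solution is a sequence of drone positions $P_0=(0,0),P_1,\dots,P_n$ with $P_i\in \mathrm{FC}(X_0,\dots,X_i)$; its cost is $\sum_{i=0}^{n-1}|P_iP_{i+1}|$ (Euclidean). An online algorithm chooses $P_i$ knowing only $X_0,\dots,X_i$. $\mathrm{OPT}(\mathbf X;\alpha)$ is the minimum cost of a solution when the whole input is known in advance. A request $X_{i+1}$ is redundant if $x_{i+1}\in[\min_{j\le i}x_j,\max_{j\le i}x_j]$. An input is good if it has no redundant requests and is scaled (and possibly reflected) so that $\min_j x_j=-1$ and $r:=\max_j x_j\in[0,1]$. The competitive ratio $\rho(\mathrm{ALG};\alpha)$ is the supremum over good inputs of $\mathrm{ALG}(\mathbf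 X;\alpha)/\mathrm{OPT}(\mathbf X;\alpha)$. The Straight-Up algorithm keeps the drone on the $y$-axis: $P_i$ is the lowest point of the $y$-axis lying in $\mathrm{FC}(X_0,\dots,X_i)$. *)

theory Defs
  imports "HOL-Analysis.Analysis"
begin

text \<open>Points of the plane are pairs (u,v) :: real \<times> real; the library metric on
  real \<times> real is the Euclidean one. An input is given by n and the sequence
  xs :: nat \<Rightarrow> real, with X_i = (xs i, 0) for i \<le> n (values beyond n are irrelevant).\<close>

definition FC :: "real \<Rightarrow> real \<Rightarrow> (real \<times> real) set" where
  "FC \<alpha> x = {(u, v). v \<ge> 0 \<and> \<bar>u - x\<bar> \<le> v * tan \<alpha>}"

definition FC_upto :: "real \<Rightarrow> (nat \<Rightarrow> real) \<Rightarrow> nat \<Rightarrow> (real \<times> real) set" where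
  "FC_upto \<alpha> xs i = (\<Inter>j\<in>{0..i}. FC \<alpha> (xs j))"

definition is_solution :: "real \<Rightarrow> nat \<Rightarrow> (nat \<Rightarrow> real) \<Rightarrow> (nat \<Rightarrow> real \<times> real) \<Rightarrow> bool" where
  "is_solution \<alpha> n xs P \<longleftrightarrow> P 0 = (0, 0) \<and> (\<forall>i\<le>n. P i \<in> FC_upto \<alpha> xs i)"

definition cost :: "nat \<Rightarrow> (nat \<Rightarrow> real \<times> real) \<Rightarrow> real" where
  "cost n P = (\<Sum>i<n. dist (P i) (P (Suc i)))"

definition OPT :: "real \<Rightarrow> nat \<Rightarrow> (nat \<Rightarrow> real) \<Rightarrow> real" where
  "OPT \<alpha> n xs = Inf {cost n P | P. is_solution \<alpha> n xs P}"

definition straight_up_pos :: "real \<Rightarrow> (nat \<Rightarrow> real) \<Rightarrow> nat \<Rightarrow> real \<times> real" where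
  "straight_up_pos \<alpha> xs i = (0, Inf {v. (0, v) \<in> FC_upto \<alpha> xs i})"

definition straight_up_cost :: "real \<Rightarrow> nat \<Rightarrow> (nat \<Rightarrow> real) \<Rightarrow> real" where
  "straight_up_cost \<alpha> n xs = cost n (straight_up_pos \<alpha> xs)"

definition redundant :: "(nat \<Rightarrow> real) \<Rightarrow> nat \<Rightarrow> bool" where
  "redundant xs i \<longleftrightarrow> xs (Suc i) \<in> {Min (xs ` {0..i}) .. Max (xs ` {0..i})}"

definition good_input :: "nat \<Rightarrow> (nat \<Rightarrow> real) \<Rightarrow> bool" where
  "good_input n xs \<longleftrightarrow> n \<ge> 1 \<and> xs 0 = 0 \<and> (\<forall>i<n. \<not> redundant xs i)
     \<and> Min (xs ` {0..n}) = -1 \<and> Max (xs ` {0..n}) \<in> {0..1}"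

definition rho_straight_up :: "real \<Rightarrow> ereal" where
  "rho_straight_up \<alpha> = (SUP (n, xs) \<in> {(n, xs). good_input n xs}.
      ereal (straight_up_cost \<alpha> n xs / OPT \<alpha> n xs))"

end

theory Submission
  imports Defs
begin

text \<open>On a good input the Straight-Up drone climbs monotonically to the height
  max_j |x_j| / tan \<alpha> = cot \<alpha>, which is therefore its cost. Every solution ends in
  FC(0) \<inter> FC(-1), so OPT is at least the distance from the origin to that region; this
  distance is attained by the two-point input 0, -1. The ratio of the two is the claimed value.\<close>

lemma sum_sq_ge_apex_of_two_cones:
  fixes t u v :: real
  assumes "0 < t" "t \<le> 1" "\<bar>u\<bar> \<le> v * t" "\<bar>u + 1\<bar> \<le> v * t"
  shows "1/4 + 1/(4 * t\<^sup>2) \<le> u\<^sup>2 + v\<^sup>2"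
proof -
  define s where "s = u + 1/2"
  have "1/2 + \<bar>s\<bar> \<le> v * t" using assms unfolding s_def by linarith
  then have "(1/2 + \<bar>s\<bar>)\<^sup>2 \<le> (v * t)\<^sup>2" by (rule power_mono) simp
  then have "1/4 + \<bar>s\<bar> + s\<^sup>2 \<le> v\<^sup>2 * t\<^sup>2" by (simp add: power2_eq_square algebra_simps)
  then have "(1/4 + \<bar>s\<bar> + s\<^sup>2) / t\<^sup>2 \<le> v\<^sup>2" using assms(1) by (simp add: pos_divide_le_eq)
  moreover have "\<bar>s\<bar> + s\<^sup>2 \<le> (\<bar>s\<bar> + s\<^sup>2) / t\<^sup>2"
    using assms(1,2) by (simp add: le_divide_eq mult_left_le power_le_one)
  moreover have "u\<^sup>2 = s\<^sup>2 - s + 1/4" unfolding s_def by (simp add: power2_eq_square algebra_simps)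
  moreover have "(1/4 + \<bar>s\<bar> + s\<^sup>2) / t\<^sup>2 = 1/(4 * t\<^sup>2) + (\<bar>s\<bar> + s\<^sup>2) / t\<^sup>2"
    by (simp add: add_divide_distrib)
  moreover have "s \<le> \<bar>s\<bar>" "0 \<le> s\<^sup>2" by simp_all
  ultimately show ?thesis by linarith
qed

lemma sum_sq_ge_of_cone:
  fixes t u v :: real
  assumes "\<bar>u + 1\<bar> \<le> v * t"
  shows "1 / (1 + t\<^sup>2) \<le> u\<^sup>2 + v\<^sup>2"
proof -
  have "1 \<le> (v * t - u)\<^sup>2" using assms by (simp add: abs_le_iff one_le_power)
  also have "\<dots> = (1 + t\<^sup>2) * (u\<^sup>2 + v\<^sup>2) - (u * t + v)\<^sup>2" by (simp add: power2_eq_square algebra_simps)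
  also have "\<dots> \<le> (1 + t\<^sup>2) * (u\<^sup>2 + v\<^sup>2)" by simp
  finally show ?thesis by (simp add: divide_le_eq add_pos_nonneg mult.commute)
qed

text \<open>The distance from the origin to FC(0) \<inter> FC(-1): for \<alpha> \<le> pi/4 it is attained at the
  apex (-1/2, 1/(2 tan \<alpha>)), otherwise at the foot (-cos(\<alpha>)^2, sin \<alpha> cos \<alpha>) of the
  perpendicular to the right edge of FC(-1).\<close>
definition cone_pair_dist :: "real \<Rightarrow> real" where
  "cone_pair_dist \<alpha> = (if \<alpha> \<le> pi/4 then 1 / (2 * sin \<alpha>) else cos \<alpha>)"

lemma quarter_add_inverse_tan_sq:
  assumes "sin x \<noteq> 0"
  shows "1/4 + 1/(4 * (tan x)\<^sup>2) = (1 / (2 * sin x))\<^sup>2"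
  using assms sin_cos_squared_add[of x] by (simp add: tan_def field_simps)

lemma cone_pair_dist_le_norm:
  assumes "0 < \<alpha>" "\<alpha> < pi/2" and "q \<in> FC \<alpha> 0" "q \<in> FC \<alpha> (-1)"
  shows "cone_pair_dist \<alpha> \<le> norm q"
proof -
  obtain u v where q: "q = (u, v)" by fastforce
  have cones: "\<bar>u\<bar> \<le> v * tan \<alpha>" "\<bar>u + 1\<bar> \<le> v * tan \<alpha>"
    using assms(3,4) unfolding q FC_def by auto
  have "(cone_pair_dist \<alpha>)\<^sup>2 \<le> u\<^sup>2 + v\<^sup>2"
  proof (cases "\<alpha> \<le> pi/4")
    case True
    then have "tan \<alpha> \<le> 1" using assms(1) tan_mono_le[of \<alpha> "pi/4"] by (simp add: tan_45)
    with True show ?thesis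
      using sum_sq_ge_apex_of_two_cones[OF tan_gt_zero[OF assms(1,2)] _ cones]
        quarter_add_inverse_tan_sq[of \<alpha>] sin_gt_zero[of \<alpha>] assms(1,2)
      by (simp add: cone_pair_dist_def)
  next
    case False
    have "1 / (1 + (tan \<alpha>)\<^sup>2) = (cos \<alpha>)\<^sup>2"
      using cos_gt_zero[of \<alpha>] assms(1,2) sin_cos_squared_add[of \<alpha>]
      by (simp add: tan_def field_simps)
    with False show ?thesis using sum_sq_ge_of_cone[OF cones(2)] by (simp add: cone_pair_dist_def)
  qed
  then show ?thesis by (simp add: q norm_Pair real_le_rsqrt)
qed

lemma cone_pair_dist_attained:
  assumes "0 < \<alpha>" "\<alpha> < pi/2"
  obtains q where "q \<in> FC \<alpha> 0" "q \<in> FC \<alpha> (-1)" "norm q = cone_pair_dist \<alpha>"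
proof (cases "\<alpha> \<le> pi/4")
  case True
  have "0 < tan \<alpha>" by (rule tan_gt_zero[OF assms])
  then have "(-1/2, 1 / (2 * tan \<alpha>)) \<in> FC \<alpha> 0 \<inter> FC \<alpha> (-1)" by (simp add: FC_def)
  moreover have "norm (-1/2 :: real, 1 / (2 * tan \<alpha>)) = cone_pair_dist \<alpha>"
  proof -
    have "norm (-1/2 :: real, 1 / (2 * tan \<alpha>)) = sqrt (1/4 + 1/(4 * (tan \<alpha>)\<^sup>2))"
      by (simp add: norm_Pair power2_eq_square)
    also have "\<dots> = 1 / (2 * sin \<alpha>)"
      using quarter_add_inverse_tan_sq[of \<alpha>] sin_gt_zero[of \<alpha>] assms by simp
    finally show ?thesis using True by (simp add: cone_pair_dist_def)
  qed
  ultimately show ?thesis using that by blast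
next
  case False
  have sc: "0 < sin \<alpha>" "0 < cos \<alpha>" using assms by (simp_all add: sin_gt_zero cos_gt_zero)
  have "1 < tan \<alpha>" using False assms tan_monotone[of "pi/4" \<alpha>] by (simp add: tan_45)
  then have "cos \<alpha> < sin \<alpha>" using sc by (simp add: tan_def field_simps)
  then have "(cos \<alpha>)\<^sup>2 \<le> (sin \<alpha>)\<^sup>2" using sc by (simp add: power_mono)
  then have "(- (cos \<alpha>)\<^sup>2, sin \<alpha> * cos \<alpha>) \<in> FC \<alpha> 0 \<inter> FC \<alpha> (-1)"
    using sc sin_cos_squared_add[of \<alpha>] by (simp add: FC_def tan_def power2_eq_square)
  moreover have "norm (- (cos \<alpha>)\<^sup>2, sin \<alpha> * cos \<alpha>) = cone_pair_dist \<alpha>"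
  proof -
    have "(- (cos \<alpha>)\<^sup>2)\<^sup>2 + (sin \<alpha> * cos \<alpha>)\<^sup>2 = (cos \<alpha>)\<^sup>2 * ((sin \<alpha>)\<^sup>2 + (cos \<alpha>)\<^sup>2)"
      by algebra
    also have "\<dots> = (cos \<alpha>)\<^sup>2" by simp
    finally have "(- (cos \<alpha>)\<^sup>2)\<^sup>2 + (sin \<alpha> * cos \<alpha>)\<^sup>2 = (cos \<alpha>)\<^sup>2" .
    then show ?thesis using False sc by (simp add: cone_pair_dist_def norm_Pair)
  qed
  ultimately show ?thesis using that by blast
qed

definition reach :: "(nat \<Rightarrow> real) \<Rightarrow> nat \<Rightarrow> real" where
  "reach xs i = Max ((\<lambda>j. \<bar>xs j\<bar>) ` {0..i})"

lemma abs_le_reach: "j \<le> i \<Longrightarrow> \<bar>xs j\<bar> \<le> reach xs i"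
  unfolding reach_def by auto

lemma reach_le_iff: "reach xs i \<le> c \<longleftrightarrow> (\<forall>j\<le>i. \<bar>xs j\<bar> \<le> c)"
  unfolding reach_def by auto

lemma reach_mono: "reach xs i \<le> reach xs (Suc i)"
  unfolding reach_def by (rule Max_mono) auto

lemma axis_in_FC_upto_iff:
  assumes "0 < tan \<alpha>"
  shows "(0, v) \<in> FC_upto \<alpha> xs i \<longleftrightarrow> reach xs i / tan \<alpha> \<le> v"
proof -
  have "(0, v) \<in> FC_upto \<alpha> xs i \<longleftrightarrow> 0 \<le> v \<and> reach xs i \<le> v * tan \<alpha>"
    by (auto simp: FC_upto_def FC_def reach_le_iff)
  also have "\<dots> \<longleftrightarrow> reach xs i \<le> v * tan \<alpha>"
  proof -
    have "0 \<le> reach xs i" using abs_le_reach[of 0 i xs] by linarith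
    then show ?thesis using assms by (auto simp: zero_le_mult_iff dest: order_trans)
  qed
  finally show ?thesis using assms by (simp add: pos_divide_le_eq)
qed

lemma straight_up_pos_eq:
  assumes "0 < tan \<alpha>"
  shows "straight_up_pos \<alpha> xs i = (0, reach xs i / tan \<alpha>)"
  unfolding straight_up_pos_def axis_in_FC_upto_iff[OF assms] by (simp flip: atLeast_def)

lemma straight_up_cost_eq:
  assumes "0 < tan \<alpha>"
  shows "straight_up_cost \<alpha> n xs = (reach xs n - \<bar>xs 0\<bar>) / tan \<alpha>"
proof -
  have "straight_up_cost \<alpha> n xs = (\<Sum>i<n. (reach xs (Suc i) - reach xs i) / tan \<alpha>)"
    unfolding straight_up_cost_def cost_def straight_up_pos_eq[OF assms]
    using reach_mono assms
    by (intro sum.cong) (auto simp: dist_Pair_Pair dist_real_def diff_divide_distrib[symmetric])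
  also have "\<dots> = (reach xs n - reach xs 0) / tan \<alpha>"
    by (simp add: sum_divide_distrib[symmetric] sum_lessThan_telescope)
  finally show ?thesis by (simp add: reach_def)
qed

lemma straight_up_is_solution:
  assumes "0 < tan \<alpha>" and "xs 0 = 0"
  shows "is_solution \<alpha> n xs (straight_up_pos \<alpha> xs)"
  using assms by (simp add: is_solution_def straight_up_pos_eq axis_in_FC_upto_iff reach_def)

lemma dist_le_cost: "dist (P 0) (P n) \<le> cost n P"
proof (induction n)
  case 0
  then show ?case by (simp add: cost_def)
next
  case (Suc n)
  then show ?case
    using dist_triangle[of "P 0" "P (Suc n)" "P n"] by (simp add: cost_def)
qed

lemma OPT_ge:
  assumes "is_solution \<alpha> n xs P" and "\<And>Q. is_solution \<alpha> n xs Q \<Longrightarrow> c \<le> cost n Q"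
  shows "c \<le> OPT \<alpha> n xs"
  unfolding OPT_def using assms by (intro cInf_greatest) auto

lemma OPT_eqI:
  assumes "is_solution \<alpha> n xs P" and "\<And>Q. is_solution \<alpha> n xs Q \<Longrightarrow> cost n P \<le> cost n Q"
  shows "OPT \<alpha> n xs = cost n P"
proof (rule antisym)
  show "OPT \<alpha> n xs \<le> cost n P"
    unfolding OPT_def using assms by (intro cInf_lower bdd_belowI[of _ "cost n P"]) auto
qed (rule OPT_ge[OF assms])

lemma good_input_obtains_neg_one:
  assumes "good_input n xs"
  obtains j where "j \<le> n" "xs j = -1"
proof -
  have "Min (xs ` {0..n}) \<in> xs ` {0..n}" by (rule Min_in) auto
  with assms that show ?thesis by (auto simp: good_input_def)
qed

lemma good_input_reach:
  assumes "good_input n xs"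
  shows "reach xs n = 1"
proof (rule antisym)
  have "Min (xs ` {0..n}) = -1" "Max (xs ` {0..n}) \<le> 1"
    using assms unfolding good_input_def by auto
  moreover have "Min (xs ` {0..n}) \<le> xs j" "xs j \<le> Max (xs ` {0..n})" if "j \<le> n" for j
    using that by auto
  ultimately have "-1 \<le> xs j \<and> xs j \<le> 1" if "j \<le> n" for j
    using that by fastforce
  then show "reach xs n \<le> 1" by (simp add: reach_le_iff abs_le_iff)
  obtain j where "j \<le> n" "xs j = -1" using good_input_obtains_neg_one[OF assms] .
  then show "1 \<le> reach xs n" using abs_le_reach[of j n xs] by simp
qed

lemma straight_up_cost_good_input:
  assumes "0 < tan \<alpha>" and "good_input n xs"
  shows "straight_up_cost \<alpha> n xs = 1 / tan \<alpha>"
  using straight_up_cost_eq[OF assms(1)] good_input_reach[OF assms(2)] assms(2)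
  by (simp add: good_input_def)

lemma cost_ge_cone_pair_dist:
  assumes "0 < \<alpha>" "\<alpha> < pi/2" and "good_input n xs" and "is_solution \<alpha> n xs P"
  shows "cone_pair_dist \<alpha> \<le> cost n P"
proof -
  obtain j where j: "j \<le> n" "xs j = -1" using good_input_obtains_neg_one[OF assms(3)] .
  have "xs 0 = 0" using assms(3) by (simp add: good_input_def)
  with j assms(4) have "P n \<in> FC \<alpha> 0" "P n \<in> FC \<alpha> (-1)"
    unfolding is_solution_def FC_upto_def by force+
  then have "cone_pair_dist \<alpha> \<le> norm (P n)" by (rule cone_pair_dist_le_norm[OF assms(1,2)])
  also have "\<dots> = dist (P 0) (P n)"
    using assms(4) by (simp add: is_solution_def dist_norm flip: zero_prod_def)
  also have "\<dots> \<le> cost n P" by (rule dist_le_cost)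
  finally show ?thesis .
qed

lemma OPT_ge_cone_pair_dist:
  assumes "0 < \<alpha>" "\<alpha> < pi/2" and "good_input n xs"
  shows "cone_pair_dist \<alpha> \<le> OPT \<alpha> n xs"
proof (rule OPT_ge)
  show "is_solution \<alpha> n xs (straight_up_pos \<alpha> xs)"
    using assms by (intro straight_up_is_solution tan_gt_zero) (simp_all add: good_input_def)
qed (rule cost_ge_cone_pair_dist[OF assms])

definition two_point_input :: "nat \<Rightarrow> real" where
  "two_point_input i = (if i = 0 then 0 else -1)"

lemma good_input_two_point: "good_input 1 two_point_input"
proof -
  have "two_point_input ` {0..1} = {0, -1}"
    by (auto simp: two_point_input_def atLeast0_atMost_Suc image_insert)
  then show ?thesis by (simp add: good_input_def redundant_def two_point_input_def)
qed

lemma OPT_two_point: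
  assumes "0 < \<alpha>" "\<alpha> < pi/2"
  shows "OPT \<alpha> 1 two_point_input = cone_pair_dist \<alpha>"
proof -
  obtain q where q: "q \<in> FC \<alpha> 0" "q \<in> FC \<alpha> (-1)" "norm q = cone_pair_dist \<alpha>"
    using cone_pair_dist_attained[OF assms] .
  define P where "P i = (if i = 0 then (0, 0) else q)" for i :: nat
  have "(0, 0) \<in> FC \<alpha> 0" using tan_gt_zero[OF assms] by (simp add: FC_def)
  then have "is_solution \<alpha> 1 two_point_input P"
    using q by (auto simp: is_solution_def FC_upto_def P_def two_point_input_def le_Suc_eq)
  moreover have "cost 1 P = cone_pair_dist \<alpha>"
    using q by (simp add: cost_def P_def dist_norm flip: zero_prod_def)
  ultimately show ?thesis
    using cost_ge_cone_pair_dist[OF assms good_input_two_point] by (metis OPT_eqI)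
qed

lemma cot_div_cone_pair_dist:
  assumes "0 < \<alpha>" "\<alpha> < pi/2"
  shows "(1 / tan \<alpha>) / cone_pair_dist \<alpha> = (if \<alpha> \<le> pi/4 then 2 * cos \<alpha> else 1 / sin \<alpha>)"
  using sin_gt_zero[of \<alpha>] cos_gt_zero[of \<alpha>] assms
  by (auto simp: cone_pair_dist_def tan_def field_simps)

theorem theorem1:
  fixes \<alpha> :: real
  assumes "0 < \<alpha>" and "\<alpha> < pi / 2"
  shows "rho_straight_up \<alpha> = ereal (if \<alpha> \<le> pi / 4 then 2 * cos \<alpha> else 1 / sin \<alpha>)"
proof -
  note su = straight_up_cost_good_input[OF tan_gt_zero[OF assms]]
  define R where "R = (1 / tan \<alpha>) / cone_pair_dist \<alpha>"
  have "0 < cone_pair_dist \<alpha>"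
    using sin_gt_zero[of \<alpha>] cos_gt_zero[of \<alpha>] assms by (simp add: cone_pair_dist_def)
  then have "straight_up_cost \<alpha> n xs / OPT \<alpha> n xs \<le> R" if "good_input n xs" for n xs
    unfolding su[OF that] R_def using tan_gt_zero[OF assms] OPT_ge_cone_pair_dist[OF assms that]
    by (intro divide_left_mono) auto
  moreover have "straight_up_cost \<alpha> 1 two_point_input / OPT \<alpha> 1 two_point_input = R"
    unfolding su[OF good_input_two_point] OPT_two_point[OF assms] R_def ..
  ultimately have "rho_straight_up \<alpha> = ereal R"
    unfolding rho_straight_up_def using good_input_two_point
    by (intro antisym SUP_least SUP_upper2[of "(1, two_point_input)"]) auto
  then show ?thesis unfolding R_def cot_div_cone_pair_dist[OF assms] .
qed

end
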